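(* Let $k \geq 1$ and $n > 2k$, and let $X^0, \ldots, X^{n-1}$ each code an ordered $2k$-partition of $\omega$, $X^p = X^p_0 \oplus \cdots \oplus X^p_{2k-1}$. Then $\mathrm{Cross}(X^0,\ldots,X^{n-1};2)$ codes an ordered $2k\binom{n}{2}$-partition of $\omega$. Consequently, if $S_0, \ldots, S_{n-1}$ are classes of codes of ordered $2k$-partitions of $\omega$, then every member of $\mathrm{Cross}(S_0,\ldots,S_{n-1};2)$ codes an ordered $2k\binom{n}{2}$-partition of $\omega$.
   Context: A set $X = X_0 \oplus \cdots \oplus X_{m-1}$ codes an ordered $m$-partition of $\omega$ if $\bigcup_{i<m} X_i = \omega$ (the parts need not be disjoint). For ordered $2k$-partitions $X^0,\ldots,X^{n-1}$, $\mathrm{Cross}(X^0,\ldots,X^{n-1};2) = \bigoplus_{j<2k,\ p<q\leq n-1} (X^p_j \cap X^q_j)$ (a join of $2k\binom{n}{2}$ sets in some fixed order). For classes $S_0,\ldots,S_{n-1}$, $\mathrm{Cross}(S_0,\ldots,S_{n-1};2)$ is the class of all $\mathrm{Cross}(X^0,\ldots,X^{n-1};2)$ with $X^p \in S_p$ for each $p \leq n-1$. *)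

theory Defs
  imports Main
begin

definition join_list :: "nat set list \<Rightarrow> nat set" where
  "join_list Ls = {length Ls * x + i | x i. i < length Ls \<and> x \<in> Ls ! i}"

definition part :: "nat \<Rightarrow> nat set \<Rightarrow> nat \<Rightarrow> nat set" where
  "part m X i = {x. m * x + i \<in> X}"

text \<open>X codes an ordered m-partition of omega: the parts (not necessarily disjoint) cover omega.\<close>
definition codes_partition :: "nat \<Rightarrow> nat set \<Rightarrow> bool" where
  "codes_partition m X \<longleftrightarrow> (\<Union>i<m. part m X i) = UNIV"

definition Cross2 :: "nat \<Rightarrow> nat \<Rightarrow> (nat \<Rightarrow> nat set) \<Rightarrow> nat set" where
  "Cross2 k n X = join_list
     [part (2*k) (X p) j \<inter> part (2*k) (X q) j. j \<leftarrow> [0..<2*k], p \<leftarrow> [0..<n], q \<leftarrow> [Suc p..<n]]"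

definition Cross2_class :: "nat \<Rightarrow> nat \<Rightarrow> (nat \<Rightarrow> nat set set) \<Rightarrow> nat set set" where
  "Cross2_class k n S = {Cross2 k n X | X. \<forall>p<n. X p \<in> S p}"

end

theory Submission
  imports Defs
begin

text \<open>Each X^p puts a given point x into some part j_p < 2k. Since n > 2k, two codes p < q
  choose the same j, so x lies in X^p_j \<inter> X^q_j, which is a part of the cross join.\<close>

lemma part_join_list:
  assumes "i < length Ls"
  shows "part (length Ls) (join_list Ls) i = Ls ! i"
proof -
  have unique: "y = x \<and> i' = i"
    if "length Ls * y + i = length Ls * x + i'" "i' < length Ls" for x y i'
  proof -
    have "i' = i"
      using arg_cong[OF that(1), of "\<lambda>t. t mod length Ls"] that(2) assms by simp
    with that(1) assms show ?thesis by auto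
  qed
  show ?thesis
    unfolding part_def join_list_def using assms by (blast dest: unique)
qed

lemma codes_partition_join_list:
  assumes "\<And>x. \<exists>A\<in>set Ls. x \<in> A"
  shows "codes_partition (length Ls) (join_list Ls)"
  unfolding codes_partition_def
proof (intro set_eqI iffI)
  fix x
  obtain A where "A \<in> set Ls" "x \<in> A" using assms by blast
  then obtain i where "i < length Ls" "Ls ! i = A" by (auto simp: in_set_conv_nth)
  with \<open>x \<in> A\<close> show "x \<in> (\<Union>i<length Ls. part (length Ls) (join_list Ls) i)"
    by (auto simp: part_join_list)
qed simp

lemma pigeonhole_nat_below:
  fixes f :: "nat \<Rightarrow> nat"
  assumes "\<And>p. p < n \<Longrightarrow> f p < m" and "m < n"
  obtains p q where "p < q" "q < n" "f p = f q"
proof -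
  have "f ` {..<n} \<subseteq> {..<m}" using assms(1) by auto
  then have "\<not> inj_on f {..<n}"
    using assms(2) card_inj_on_le[of f "{..<n}" "{..<m}"] by auto
  then obtain p q where "p < n" "q < n" "p \<noteq> q" "f p = f q"
    unfolding inj_on_def by auto
  then show thesis
    using that by (cases "p < q") (auto simp: not_less_iff_gr_or_eq)
qed

lemma sum_diff_Suc_eq_choose_two: "(\<Sum>p<n. n - Suc p) = n choose 2"
proof (induction n)
  case 0
  show ?case by simp
next
  case (Suc n)
  have "(\<Sum>p<Suc n. Suc n - Suc p) = (\<Sum>p<n. 1 + (n - Suc p))"
    by (simp add: sum.lessThan_Suc Suc_diff_Suc)
  also have "\<dots> = n + (n choose 2)"
    using Suc by (simp only: sum.distrib) simp
  also have "\<dots> = Suc n choose 2"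
    by (simp add: choose_two numeral_2_eq_2)
  finally show ?case .
qed

definition cross2_parts :: "nat \<Rightarrow> nat \<Rightarrow> (nat \<Rightarrow> nat set) \<Rightarrow> nat set list" where
  "cross2_parts k n X =
     [part (2*k) (X p) j \<inter> part (2*k) (X q) j. j \<leftarrow> [0..<2*k], p \<leftarrow> [0..<n], q \<leftarrow> [Suc p..<n]]"

lemma Cross2_eq_join_cross2_parts: "Cross2 k n X = join_list (cross2_parts k n X)"
  unfolding Cross2_def cross2_parts_def ..

lemma length_cross2_parts: "length (cross2_parts k n X) = 2 * k * (n choose 2)"
  by (simp add: cross2_parts_def length_concat o_def sum_list_triv
      sum_set_upt_conv_sum_list_nat[symmetric] atLeast0LessThan sum_diff_Suc_eq_choose_two)

lemma mem_cross2_parts: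
  assumes "j < 2*k" and "p < q" and "q < n"
  shows "part (2*k) (X p) j \<inter> part (2*k) (X q) j \<in> set (cross2_parts k n X)"
  using assms unfolding cross2_parts_def by force

lemma codes_partition_Cross2:
  assumes "n > 2 * k" and "\<And>p. p < n \<Longrightarrow> codes_partition (2 * k) (X p)"
  shows "codes_partition (2 * k * (n choose 2)) (Cross2 k n X)"
proof -
  have "\<exists>A\<in>set (cross2_parts k n X). x \<in> A" for x
  proof -
    have "\<forall>p<n. \<exists>j<2*k. x \<in> part (2*k) (X p) j"
      using assms(2) unfolding codes_partition_def by blast
    then obtain f where f: "\<And>p. p < n \<Longrightarrow> f p < 2*k \<and> x \<in> part (2*k) (X p) (f p)"
      by metis
    obtain p q where "p < q" "q < n" "f p = f q"
      using pigeonhole_nat_below[of n f "2*k"] f assms(1) by blast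
    with f have x_in: "x \<in> part (2*k) (X p) (f p) \<inter> part (2*k) (X q) (f p)"
      and "f p < 2*k"
      by (metis IntI less_trans)+
    show ?thesis
      using mem_cross2_parts[OF \<open>f p < 2*k\<close> \<open>p < q\<close> \<open>q < n\<close>] x_in by (rule bexI[rotated])
  qed
  then show ?thesis
    using codes_partition_join_list
    by (metis Cross2_eq_join_cross2_parts length_cross2_parts)
qed

theorem lemma6p1:
  fixes k n :: nat and X :: "nat \<Rightarrow> nat set"
  assumes "k \<ge> 1" and "n > 2 * k"
    and "\<forall>p<n. codes_partition (2 * k) (X p)"
  shows "codes_partition (2 * k * (n choose 2)) (Cross2 k n X)
     \<and> (\<forall>S :: nat \<Rightarrow> nat set set.
          (\<forall>p<n. \<forall>Y\<in>S p. codes_partition (2 * k) Y) \<longrightarrow>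
          (\<forall>Z\<in>Cross2_class k n S. codes_partition (2 * k * (n choose 2)) Z))"
  using codes_partition_Cross2[OF assms(2)] assms(3) unfolding Cross2_class_def by blast

end
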